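(* Let $v_{i_1},\dots,v_{i_m}$ be distinct variables and $e,f,g_1,\dots,g_m,h_1,\dots,h_m\in\mathsf{Exp}/{\sim}$. Then $\mathsf{bd}\big(e[(g_1,\dots,g_m)/(v_{i_1},\dots,v_{i_m})],\,f[(h_1,\dots,h_m)/(v_{i_1},\dots,v_{i_m})]\big)\le\max\{\mathsf{bd}(e,f),\max_{1\le j\le m}\mathsf{bd}(g_j,h_j)\}$.
   Context: Fix variables $V=\{v_1,v_2,\dots\}$ and letters $\Sigma$. Expressions: $e\in\mathsf{Exp}::=0\mid v\ (v\in V)\mid a.e\mid e+f\mid\mu v.e$ ($\mu v$ binds $v$); $e[\vec f/\vec v]$ is simultaneous capture-avoiding substitution. The prechart $(\mathsf{Exp},\partial)$: least relations with $a.e\xrightarrow{a}e$; $v\rhd v$; $e+f$ has all transitions and outputs of $e$ and of $f$; $\mu w.e\rhd v$ if $e\rhd v$, $v\ne w$; $\mu v.e\xrightarrow{a}e'[\mu v.e/v]$ if $e\xrightarrow{a}e'$. Bisimilarity $\sim$ is a congruence for all operations including substitution; $\mathsf{Exp}/{\sim}$ is a prechart $\bar\partial$ via $[e]\xrightarrow{a}[e']$ iff $e\xrightarrow{a}e'$, $[e]\rhd v$ iff $e\rhd v$; it maps $[e]$ to $\beta([e])=\{(a,[e'])\}\cup\{v\mid e\rhd v\}$, a finite set. A 1-bounded pseudometric on $X$ is $d:X\times X\to[0,1]$ with $d(x,x)=0$, symmetry, triangle inequality, ordered pointwise. $d^\uparrow$ on $\Sigma\times X+V$: $d^\uparrow((a,x),(a,y))=\tfrac12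 d(x,y)$, $0$ if equal, $1$ otherwise. $\mathcal H(d)(A,B)=\max\{\sup_{x\in A}\inf_{y\in B}d(x,y),\sup_{y\in B}\inf_{x\in A}d(y,x)\}$, $\sup\emptyset=0$, $\inf\emptyset=1$. $\mathsf{bd}$ is the least fixpoint of $d\mapsto\big((x,y)\mapsto\mathcal H(d^\uparrow)(\beta(x),\beta(y))\big)$ on pseudometrics on $\mathsf{Exp}/{\sim}$. *)

theory Defs
  imports Complex_Main
begin

text \<open>Variables v_i are represented by natural numbers i; letters by an arbitrary type 'a.\<close>

datatype 'a exp = Zero | Var nat | Act 'a "'a exp" | Plus "'a exp" "'a exp" | Mu nat "'a exp"

primrec fv :: "'a exp \<Rightarrow> nat set" where
  "fv Zero = {}"
| "fv (Var v) = {v}"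
| "fv (Act a e) = fv e"
| "fv (Plus e f) = fv e \<union> fv f"
| "fv (Mu v e) = fv e - {v}"

definition fresh :: "nat set \<Rightarrow> nat" where
  "fresh S = Suc (Max (insert 0 S))"

text \<open>Simultaneous capture-avoiding substitution: the bound variable is renamed
  to a fresh one whenever it would capture a free variable of a substituted expression.\<close>
primrec subst :: "(nat \<Rightarrow> 'a exp) \<Rightarrow> 'a exp \<Rightarrow> 'a exp" where
  "subst \<sigma> Zero = Zero"
| "subst \<sigma> (Var v) = \<sigma> v"
| "subst \<sigma> (Act a e) = Act a (subst \<sigma> e)"
| "subst \<sigma> (Plus e f) = Plus (subst \<sigma> e) (subst \<sigma> f)"
| "subst \<sigma> (Mu v e) =
     (let S = (\<Union>u\<in>fv e - {v}. fv (\<sigma> u)) \<union> fv e;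
          w = (if v \<in> (\<Union>u\<in>fv e - {v}. fv (\<sigma> u)) then fresh S else v)
      in Mu w (subst (\<sigma>(v := Var w)) e))"

definition simsub :: "nat list \<Rightarrow> 'a exp list \<Rightarrow> nat \<Rightarrow> 'a exp" where
  "simsub vs gs v = (case map_of (zip vs gs) v of Some g \<Rightarrow> g | None \<Rightarrow> Var v)"

inductive out :: "'a exp \<Rightarrow> nat \<Rightarrow> bool" where
  "out (Var v) v"
| "out e v \<Longrightarrow> out (Plus e f) v"
| "out f v \<Longrightarrow> out (Plus e f) v"
| "out e v \<Longrightarrow> v \<noteq> w \<Longrightarrow> out (Mu w e) v"

inductive step :: "'a exp \<Rightarrow> 'a \<Rightarrow> 'a exp \<Rightarrow> bool" where
  "step (Act a e) a e"
| "step e a e' \<Longrightarrow> step (Plus e f) a e'"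
| "step f a f' \<Longrightarrow> step (Plus e f) a f'"
| "step e a e' \<Longrightarrow> step (Mu v e) a (subst (Var(v := Mu v e)) e')"

definition bisimulation :: "('a exp \<times> 'a exp) set \<Rightarrow> bool" where
  "bisimulation R \<longleftrightarrow> (\<forall>(x, y) \<in> R.
      (\<forall>v. out x v \<longleftrightarrow> out y v)
    \<and> (\<forall>a x'. step x a x' \<longrightarrow> (\<exists>y'. step y a y' \<and> (x', y') \<in> R))
    \<and> (\<forall>a y'. step y a y' \<longrightarrow> (\<exists>x'. step x a x' \<and> (x', y') \<in> R)))"

definition bisim :: "'a exp \<Rightarrow> 'a exp \<Rightarrow> bool" where
  "bisim x y \<longleftrightarrow> (\<exists>R. bisimulation R \<and> (x, y) \<in> R)"

definition cls :: "'a exp \<Rightarrow> 'a exp set" where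
  "cls e = {f. bisim e f}"

definition Q :: "'a exp set set" where
  "Q = range cls"

definition beta :: "'a exp set \<Rightarrow> ('a \<times> 'a exp set + nat) set" where
  "beta X = {Inl (a, cls e') | a e e'. e \<in> X \<and> step e a e'} \<union> {Inr v | v e. e \<in> X \<and> out e v}"

definition lift :: "('b \<Rightarrow> 'b \<Rightarrow> real) \<Rightarrow> ('a \<times> 'b + nat) \<Rightarrow> ('a \<times> 'b + nat) \<Rightarrow> real" where
  "lift d p q = (case (p, q) of
      (Inl (a, x), Inl (b, y)) \<Rightarrow> (if a = b then d x y / 2 else 1)
    | _ \<Rightarrow> (if p = q then 0 else 1))"

definition sup0 :: "real set \<Rightarrow> real" where
  "sup0 S = (if S = {} then 0 else Sup S)"

definition inf1 :: "real set \<Rightarrow> real" where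
  "inf1 S = (if S = {} then 1 else Inf S)"

definition hausdorff :: "('c \<Rightarrow> 'c \<Rightarrow> real) \<Rightarrow> 'c set \<Rightarrow> 'c set \<Rightarrow> real" where
  "hausdorff d A B = max (sup0 ((\<lambda>x. inf1 ((\<lambda>y. d x y) ` B)) ` A))
                         (sup0 ((\<lambda>y. inf1 ((\<lambda>x. d y x) ` A)) ` B))"

definition Phi :: "('a exp set \<Rightarrow> 'a exp set \<Rightarrow> real) \<Rightarrow> 'a exp set \<Rightarrow> 'a exp set \<Rightarrow> real" where
  "Phi d x y = hausdorff (lift d) (beta x) (beta y)"

definition pseudometric_on :: "'c set \<Rightarrow> ('c \<Rightarrow> 'c \<Rightarrow> real) \<Rightarrow> bool" where
  "pseudometric_on X d \<longleftrightarrow> (\<forall>x\<in>X. \<forall>y\<in>X. 0 \<le> d x y \<and> d x y \<le> 1 \<and> d x x = 0 \<and> d x y = d y x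
      \<and> (\<forall>z\<in>X. d x z \<le> d x y + d y z))"

text \<open>bd: the least fixpoint of Phi among 1-bounded pseudometrics on Exp/~ (ordered
  pointwise); values outside Exp/~ are normalised to 0 so that it is uniquely determined.\<close>
definition bd :: "'a exp set \<Rightarrow> 'a exp set \<Rightarrow> real" where
  "bd = (THE d. pseudometric_on Q d
           \<and> (\<forall>x\<in>Q. \<forall>y\<in>Q. Phi d x y = d x y)
           \<and> (\<forall>x y. x \<notin> Q \<or> y \<notin> Q \<longrightarrow> d x y = 0)
           \<and> (\<forall>d'. pseudometric_on Q d' \<and> (\<forall>x\<in>Q. \<forall>y\<in>Q. Phi d' x y = d' x y)
                   \<longrightarrow> (\<forall>x\<in>Q. \<forall>y\<in>Q. d x y \<le> d' x y)))"

end

theory Submission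
  imports Defs
begin

text \<open>The distance \<open>bd\<close> has an explicit form: \<open>bd [x] [y] = (1/2)^n\<close> for the largest \<open>n\<close>
  such that \<open>x\<close> and \<open>y\<close> are \<open>n\<close>-step bisimilar, and \<open>0\<close> if they are \<open>n\<close>-step bisimilar for
  every \<open>n\<close>. This function is a fixpoint of the Hausdorff lifting because the lifting halves the
  distance of successors, and every pseudometric fixpoint dominates it, by induction on the depth
  at which \<open>x\<close> and \<open>y\<close> are distinguished.

  Simultaneous substitution preserves \<open>n\<close>-step bisimilarity: a transition of \<open>e[\<sigma>]\<close> comes
  either from an output \<open>v\<close> of \<open>e\<close> followed by a transition of \<open>\<sigma> v\<close>, or from a transition
  of \<open>e\<close> followed by the substitution (up to alpha-equivalence). Hence if the right-hand maximum
  is at most \<open>(1/2)^n\<close>, all pairs \<open>(e, f)\<close>, \<open>(g\<^sub>j, h\<^sub>j)\<close> are \<open>n\<close>-step bisimilar, and so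
  are the two substitution instances; since the maximum is itself the distance of one of these
  pairs, the inequality follows.\<close>

lemma finite_fv [simp]: "finite (fv e)"
  by (induct e) auto

lemma fresh_notin: "finite S \<Longrightarrow> fresh S \<notin> S"
  unfolding fresh_def using Max_ge[of "insert 0 S"] by fastforce

lemma subst_Mu_fresh:
  obtains w where "subst \<sigma> (Mu v e) = Mu w (subst (\<sigma>(v := Var w)) e)"
    and "\<forall>u\<in>fv e - {v}. w \<notin> fv (\<sigma> u)"
proof -
  define U where "U = (\<Union>u\<in>fv e - {v}. fv (\<sigma> u))"
  define w where "w = (if v \<in> U then fresh (U \<union> fv e) else v)"
  have "subst \<sigma> (Mu v e) = Mu w (subst (\<sigma>(v := Var w)) e)"
    by (simp add: Let_def U_def w_def)
  moreover have "\<forall>u\<in>fv e - {v}. w \<notin> fv (\<sigma> u)"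
    using fresh_notin[of "U \<union> fv e"] by (auto simp: w_def U_def)
  ultimately show thesis by (rule that)
qed

lemma subst_cong: "(\<And>u. u \<in> fv x \<Longrightarrow> \<sigma> u = \<tau> u) \<Longrightarrow> subst \<sigma> x = subst \<tau> x"
proof (induct x arbitrary: \<sigma> \<tau>)
  case (Mu v e)
  have U: "(\<Union>u\<in>fv e - {v}. fv (\<sigma> u)) = (\<Union>u\<in>fv e - {v}. fv (\<tau> u))"
    using Mu.prems by (intro SUP_cong) auto
  have "subst (\<sigma>(v := Var w)) e = subst (\<tau>(v := Var w)) e" for w
    by (rule Mu.hyps) (use Mu.prems in auto)
  then show ?case
    unfolding subst.simps Let_def U by presburger
next
  case (Plus e f)
  then show ?case by (metis UnCI fv.simps(4) subst.simps(4))
next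
  case (Act a e)
  then show ?case by (metis fv.simps(3) subst.simps(3))
qed simp_all

lemma subst_Var [simp]: "subst Var x = x"
proof (induct x)
  case (Mu v e)
  then show ?case by (simp add: Let_def)
qed auto

lemma subst_id: "(\<And>u. u \<in> fv x \<Longrightarrow> \<sigma> u = Var u) \<Longrightarrow> subst \<sigma> x = x"
  using subst_cong[of x \<sigma> Var] by simp

lemma subst_upd_fresh: "w \<notin> fv x \<Longrightarrow> subst (Var(w := M)) x = x"
  by (rule subst_id) auto

lemma fv_subst: "fv (subst \<sigma> x) \<subseteq> (\<Union>u\<in>fv x. fv (\<sigma> u))"
proof (induct x arbitrary: \<sigma>)
  case (Mu v e)
  obtain w where w: "subst \<sigma> (Mu v e) = Mu w (subst (\<sigma>(v := Var w)) e)"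
    "\<forall>u\<in>fv e - {v}. w \<notin> fv (\<sigma> u)" by (rule subst_Mu_fresh)
  have "fv (subst (\<sigma>(v := Var w)) e) \<subseteq> (\<Union>u\<in>fv e. fv ((\<sigma>(v := Var w)) u))"
    by (rule Mu.hyps)
  then show ?case using w by (auto split: if_splits)
qed fastforce+

inductive_simps out_simps [simp]:
  "out Zero v" "out (Var u) v" "out (Act a e) v" "out (Plus e f) v" "out (Mu w e) v"

inductive_simps step_simps [simp]:
  "step Zero a r" "step (Var u) a r" "step (Act b e) a r" "step (Plus e f) a r" "step (Mu w e) a r"

lemma out_fv: "out x v \<Longrightarrow> v \<in> fv x"
  by (induct rule: out.induct) auto

lemma step_fv: "step x a x' \<Longrightarrow> fv x' \<subseteq> fv x"
proof (induct rule: step.induct)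
  case (4 e a e' v)
  have "fv (subst (Var(v := Mu v e)) e') \<subseteq> (\<Union>u\<in>fv e'. fv ((Var(v := Mu v e)) u))"
    by (rule fv_subst)
  also have "\<dots> \<subseteq> fv (Mu v e)" using 4 by (auto split: if_splits)
  finally show ?case .
qed auto

lemma out_subst: "out (subst \<sigma> s) v \<longleftrightarrow> (\<exists>u. out s u \<and> out (\<sigma> u) v)"
proof (induct s arbitrary: \<sigma>)
  case (Mu y e)
  obtain w where w: "subst \<sigma> (Mu y e) = Mu w (subst (\<sigma>(y := Var w)) e)"
    "\<forall>u\<in>fv e - {y}. w \<notin> fv (\<sigma> u)" by (rule subst_Mu_fresh)
  have "out (subst \<sigma> (Mu y e)) v \<longleftrightarrow> out (subst (\<sigma>(y := Var w)) e) v \<and> v \<noteq> w"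
    unfolding w(1) by simp
  also have "\<dots> \<longleftrightarrow> (\<exists>u. out e u \<and> out ((\<sigma>(y := Var w)) u) v) \<and> v \<noteq> w"
    using Mu.hyps by simp
  also have "\<dots> \<longleftrightarrow> (\<exists>u. out (Mu y e) u \<and> out (\<sigma> u) v)"
    using w(2) out_fv[of e] out_fv[of "\<sigma> _" v] by auto
  finally show ?case .
qed auto

section \<open>Alpha-equivalence\<close>

text \<open>Since \<open>subst\<close> renames bound variables, substitution commutes with transitions only up to
  alpha-equivalence, which is decided by comparing de Bruijn forms.\<close>

datatype 'a lexp = LZero | LFree nat | LBound nat | LAct 'a "'a lexp" | LPlus "'a lexp" "'a lexp" | LMu "'a lexp"

primrec idx :: "nat list \<Rightarrow> nat \<Rightarrow> nat" where
  "idx [] u = 0"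
| "idx (x # xs) u = (if x = u then 0 else Suc (idx xs u))"

text \<open>De Bruijn form of an expression in which the variables of the list \<open>S\<close> are bound,
  the head of \<open>S\<close> by the innermost \<open>\<mu>\<close>.\<close>
primrec db :: "nat list \<Rightarrow> 'a exp \<Rightarrow> 'a lexp" where
  "db S Zero = LZero"
| "db S (Var u) = (if u \<in> set S then LBound (idx S u) else LFree u)"
| "db S (Act a e) = LAct a (db S e)"
| "db S (Plus e f) = LPlus (db S e) (db S f)"
| "db S (Mu v e) = LMu (db (v # S) e)"

primrec lsubst :: "(nat \<Rightarrow> 'a lexp) \<Rightarrow> 'a lexp \<Rightarrow> 'a lexp" where
  "lsubst g LZero = LZero"
| "lsubst g (LFree u) = g u"
| "lsubst g (LBound i) = LBound i"
| "lsubst g (LAct a t) = LAct a (lsubst g t)"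
| "lsubst g (LPlus t1 t2) = LPlus (lsubst g t1) (lsubst g t2)"
| "lsubst g (LMu t) = LMu (lsubst g t)"

primrec lfv :: "'a lexp \<Rightarrow> nat set" where
  "lfv LZero = {}"
| "lfv (LFree u) = {u}"
| "lfv (LBound i) = {}"
| "lfv (LAct a t) = lfv t"
| "lfv (LPlus t1 t2) = lfv t1 \<union> lfv t2"
| "lfv (LMu t) = lfv t"

primrec lopen :: "nat \<Rightarrow> nat \<Rightarrow> 'a lexp \<Rightarrow> 'a lexp" where
  "lopen z k LZero = LZero"
| "lopen z k (LFree u) = LFree u"
| "lopen z k (LBound i) = (if i = k then LFree z else LBound i)"
| "lopen z k (LAct a t) = LAct a (lopen z k t)"
| "lopen z k (LPlus t1 t2) = LPlus (lopen z k t1) (lopen z k t2)"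
| "lopen z k (LMu t) = LMu (lopen z (Suc k) t)"

primrec lout :: "'a lexp \<Rightarrow> nat \<Rightarrow> bool" where
  "lout LZero v = False"
| "lout (LFree u) v = (u = v)"
| "lout (LBound i) v = False"
| "lout (LAct a t) v = False"
| "lout (LPlus t1 t2) v = (lout t1 v \<or> lout t2 v)"
| "lout (LMu t) v = lout t v"

definition alpha_equiv :: "'a exp \<Rightarrow> 'a exp \<Rightarrow> bool" where
  "alpha_equiv x y \<longleftrightarrow> db [] x = db [] y"

lemma idx_less: "u \<in> set S \<Longrightarrow> idx S u < length S"
  by (induct S) auto

lemma idx_append_in: "u \<in> set S \<Longrightarrow> idx (S @ T) u = idx S u"
  by (induct S) auto

lemma idx_append_notin: "u \<notin> set S \<Longrightarrow> idx (S @ T) u = length S + idx T u"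
  by (induct S) auto

lemma lfv_db: "lfv (db S x) = fv x - set S"
  by (induct x arbitrary: S) auto

lemma lsubst_cong: "(\<And>u. u \<in> lfv t \<Longrightarrow> f u = g u) \<Longrightarrow> lsubst f t = lsubst g t"
  by (induct t) auto

lemma lsubst_lsubst: "lsubst g (lsubst f t) = lsubst (\<lambda>u. lsubst g (f u)) t"
  by (induct t) auto

lemma lsubst_LFree: "(\<And>u. u \<in> lfv t \<Longrightarrow> f u = LFree u) \<Longrightarrow> lsubst f t = t"
  by (induct t) auto

lemma db_append: "(\<And>u. u \<in> fv y \<Longrightarrow> u \<in> set S \<Longrightarrow> u \<in> set T) \<Longrightarrow> db (T @ S) y = db T y"
proof (induct y arbitrary: T)
  case (Var u)
  then show ?case by (auto simp: idx_append_in)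
next
  case (Mu v e)
  have "db ((v # T) @ S) e = db (v # T) e" by (rule Mu.hyps) (use Mu.prems in auto)
  then show ?case by simp
qed fastforce+

lemma db_closed: "fv y \<inter> set S = {} \<Longrightarrow> db S y = db [] y"
  using db_append[of y S "[]"] by auto

lemma db_lopen: "db S x = lopen z (length S) (db (S @ [z]) x)"
proof (induct x arbitrary: S)
  case (Var u)
  then show ?case
    by (cases "u \<in> set S") (auto simp: idx_append_in idx_append_notin dest: idx_less)
next
  case (Act a e)
  show ?case using Act.hyps[of S] by simp
next
  case (Plus e f)
  show ?case using Plus.hyps[of S] by simp
next
  case (Mu v e)
  show ?case using Mu.hyps[of "v # S"] by simp
qed simp

lemma db_singleton_eqD: "db [v] x = db [v] y \<Longrightarrow> db [] x = db [] y"
  using db_lopen[of "[]" x v] db_lopen[of "[]" y v] by simp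

lemma lout_db: "lout (db S x) v \<longleftrightarrow> out x v \<and> v \<notin> set S"
  by (induct x arbitrary: S) auto

text \<open>The hypothesis: \<open>\<sigma>\<close> renames each variable bound by \<open>S\<close> to the variable bound by \<open>S'\<close>
  at the same index, and sends the other variables to terms with no free variable in \<open>S'\<close>.\<close>
lemma db_subst:
  assumes "length S = length S'"
    and "\<And>u. u \<in> fv x \<Longrightarrow>
      (u \<in> set S \<longrightarrow> \<sigma> u = Var (S' ! idx S u) \<and> idx S' (S' ! idx S u) = idx S u)
      \<and> (u \<notin> set S \<longrightarrow> fv (\<sigma> u) \<inter> set S' = {})"
  shows "db S' (subst \<sigma> x) = lsubst (\<lambda>u. db [] (\<sigma> u)) (db S x)"
  using assms
proof (induct x arbitrary: S S' \<sigma>)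
  case (Var u)
  show ?case
  proof (cases "u \<in> set S")
    case True
    then have "S' ! idx S u \<in> set S'" using Var.prems(1) idx_less[OF True] by simp
    then show ?thesis using Var.prems True by simp
  next
    case False
    then show ?thesis using Var.prems db_closed[of "\<sigma> u" S'] by simp
  qed
next
  case (Mu v e)
  obtain w where w: "subst \<sigma> (Mu v e) = Mu w (subst (\<sigma>(v := Var w)) e)"
    "\<forall>u\<in>fv e - {v}. w \<notin> fv (\<sigma> u)" by (rule subst_Mu_fresh)
  have "db (w # S') (subst (\<sigma>(v := Var w)) e)
      = lsubst (\<lambda>u. db [] ((\<sigma>(v := Var w)) u)) (db (v # S) e)"
  proof (rule Mu.hyps)
    fix u assume u: "u \<in> fv e"
    show "(u \<in> set (v # S) \<longrightarrow> (\<sigma>(v := Var w)) u = Var ((w # S') ! idx (v # S) u) \<and>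
            idx (w # S') ((w # S') ! idx (v # S) u) = idx (v # S) u) \<and>
          (u \<notin> set (v # S) \<longrightarrow> fv ((\<sigma>(v := Var w)) u) \<inter> set (w # S') = {})"
    proof (cases "u = v")
      case False
      then have "u \<in> fv (Mu v e)" and "w \<notin> fv (\<sigma> u)" using u w(2) by auto
      then show ?thesis using Mu.prems(2) False by auto
    qed simp
  qed (use Mu.prems in simp)
  also have "\<dots> = lsubst (\<lambda>u. db [] (\<sigma> u)) (db (v # S) e)"
    by (rule lsubst_cong) (auto simp: lfv_db)
  finally show ?case using w(1) by simp
next
  case (Act a e)
  have "db S' (subst \<sigma> e) = lsubst (\<lambda>u. db [] (\<sigma> u)) (db S e)"
    using Act.prems by (auto intro!: Act.hyps)
  then show ?case by simp
next
  case (Plus e f)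
  have "db S' (subst \<sigma> e) = lsubst (\<lambda>u. db [] (\<sigma> u)) (db S e)"
    "db S' (subst \<sigma> f) = lsubst (\<lambda>u. db [] (\<sigma> u)) (db S f)"
    using Plus.prems by (auto intro!: Plus.hyps)
  then show ?case by simp
qed simp

lemma db_subst_Nil: "db [] (subst \<sigma> x) = lsubst (\<lambda>u. db [] (\<sigma> u)) (db [] x)"
  by (rule db_subst) auto

lemma alpha_equiv_subst_subst: "alpha_equiv (subst \<sigma>2 (subst \<sigma>1 x)) (subst (\<lambda>u. subst \<sigma>2 (\<sigma>1 u)) x)"
  by (simp add: alpha_equiv_def db_subst_Nil lsubst_lsubst)

lemma alpha_equiv_subst:
  "alpha_equiv x y \<Longrightarrow> (\<And>u. u \<in> fv x \<Longrightarrow> alpha_equiv (\<sigma> u) (\<tau> u))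
    \<Longrightarrow> alpha_equiv (subst \<sigma> x) (subst \<tau> y)"
proof -
  assume xy: "alpha_equiv x y" and \<sigma>\<tau>: "\<And>u. u \<in> fv x \<Longrightarrow> alpha_equiv (\<sigma> u) (\<tau> u)"
  have "lsubst (\<lambda>u. db [] (\<sigma> u)) (db [] x) = lsubst (\<lambda>u. db [] (\<tau> u)) (db [] x)"
    by (rule lsubst_cong) (use \<sigma>\<tau> in \<open>simp add: lfv_db alpha_equiv_def\<close>)
  with xy show ?thesis
    unfolding alpha_equiv_def db_subst_Nil by simp
qed

section \<open>Transitions of substitution instances\<close>

lemma alpha_equiv_out: "alpha_equiv x y \<Longrightarrow> out x v \<longleftrightarrow> out y v"
  unfolding alpha_equiv_def by (metis lout_db empty_iff list.set(1))

lemma step_subst_of_out: "out s u \<Longrightarrow> step (\<sigma> u) a r \<Longrightarrow> step (subst \<sigma> s) a r"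
proof (induct arbitrary: \<sigma> rule: out.induct)
  case (4 e v w)
  obtain w' where w': "subst \<sigma> (Mu w e) = Mu w' (subst (\<sigma>(w := Var w')) e)"
    "\<forall>u\<in>fv e - {w}. w' \<notin> fv (\<sigma> u)" by (rule subst_Mu_fresh)
  have "step (subst (\<sigma>(w := Var w')) e) a r" using 4 by simp
  moreover have "w' \<notin> fv r"
    using w'(2) out_fv[OF 4(1)] 4(3) step_fv[OF 4(4)] by auto
  ultimately show ?case
    unfolding w'(1) step_simps by (intro exI[of _ r]) (simp add: subst_upd_fresh)
qed simp_all

lemma alpha_equiv_subst_unfold:
  assumes w: "subst \<sigma> (Mu v e) = Mu w (subst (\<sigma>(v := Var w)) e)"
      "\<forall>u\<in>fv e - {v}. w \<notin> fv (\<sigma> u)"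
    and "fv e' \<subseteq> fv e"
    and r: "alpha_equiv r (subst (\<sigma>(v := Var w)) e')"
  shows "alpha_equiv (subst (Var(w := subst \<sigma> (Mu v e))) r) (subst \<sigma> (subst (Var(v := Mu v e)) e'))"
proof -
  let ?\<rho> = "Var(w := subst \<sigma> (Mu v e))"
  have "alpha_equiv (subst ?\<rho> r) (subst ?\<rho> (subst (\<sigma>(v := Var w)) e'))"
    using r by (rule alpha_equiv_subst) (simp add: alpha_equiv_def)
  moreover have "alpha_equiv (subst ?\<rho> (subst (\<sigma>(v := Var w)) e'))
      (subst (\<lambda>u. subst ?\<rho> ((\<sigma>(v := Var w)) u)) e')"
    by (rule alpha_equiv_subst_subst)
  moreover have "subst (\<lambda>u. subst ?\<rho> ((\<sigma>(v := Var w)) u)) e'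
      = subst (\<lambda>u. subst \<sigma> ((Var(v := Mu v e)) u)) e'"
    by (rule subst_cong) (use assms in \<open>auto simp: subst_upd_fresh\<close>)
  moreover have "alpha_equiv (subst \<sigma> (subst (Var(v := Mu v e)) e'))
      (subst (\<lambda>u. subst \<sigma> ((Var(v := Mu v e)) u)) e')"
    by (rule alpha_equiv_subst_subst)
  ultimately show ?thesis unfolding alpha_equiv_def by simp
qed

lemma step_subst_of_step:
  "step s a s' \<Longrightarrow> \<exists>r. step (subst \<sigma> s) a r \<and> alpha_equiv r (subst \<sigma> s')"
proof (induct arbitrary: \<sigma> rule: step.induct)
  case (1 a e)
  then show ?case by (simp add: alpha_equiv_def)
next
  case (2 e a e' f)
  show ?case using 2(2)[of \<sigma>] by auto
next
  case (3 f a f' e)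
  show ?case using 3(2)[of \<sigma>] by auto
next
  case (4 e a e' v)
  obtain w where w: "subst \<sigma> (Mu v e) = Mu w (subst (\<sigma>(v := Var w)) e)"
    "\<forall>u\<in>fv e - {v}. w \<notin> fv (\<sigma> u)" by (rule subst_Mu_fresh)
  obtain r where r: "step (subst (\<sigma>(v := Var w)) e) a r"
    "alpha_equiv r (subst (\<sigma>(v := Var w)) e')"
    using 4(2) by blast
  have "step (subst \<sigma> (Mu v e)) a (subst (Var(w := subst \<sigma> (Mu v e))) r)"
    unfolding w(1) using r(1) by (rule step.intros)
  moreover have "alpha_equiv (subst (Var(w := subst \<sigma> (Mu v e))) r)
      (subst \<sigma> (subst (Var(v := Mu v e)) e'))"
    by (rule alpha_equiv_subst_unfold[OF w step_fv[OF 4(1)] r(2)])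
  ultimately show ?case by blast
qed

lemma step_subst_cases:
  "step (subst \<sigma> s) a r \<Longrightarrow>
    (\<exists>u. out s u \<and> step (\<sigma> u) a r) \<or> (\<exists>s'. step s a s' \<and> alpha_equiv r (subst \<sigma> s'))"
proof (induct s arbitrary: \<sigma> r)
  case (Act b e)
  then show ?case by (auto simp: alpha_equiv_def)
next
  case (Plus e f)
  then have "step (subst \<sigma> e) a r \<or> step (subst \<sigma> f) a r" by simp
  then show ?case using Plus.hyps[of \<sigma> r] by auto
next
  case (Mu v e)
  obtain w where w: "subst \<sigma> (Mu v e) = Mu w (subst (\<sigma>(v := Var w)) e)"
    "\<forall>u\<in>fv e - {v}. w \<notin> fv (\<sigma> u)" by (rule subst_Mu_fresh)
  from Mu.prems obtain r0 where r0: "step (subst (\<sigma>(v := Var w)) e) a r0"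
    and r: "r = subst (Var(w := subst \<sigma> (Mu v e))) r0"
    unfolding w(1) by auto
  from Mu.hyps[OF r0] show ?case
  proof (elim disjE exE conjE)
    fix u assume u: "out e u" "step ((\<sigma>(v := Var w)) u) a r0"
    then have "u \<noteq> v" by auto
    with u have "out (Mu v e) u" "step (\<sigma> u) a r0" by auto
    moreover have "w \<notin> fv r0"
      using w(2) \<open>u \<noteq> v\<close> out_fv[OF u(1)] step_fv[OF \<open>step (\<sigma> u) a r0\<close>] by auto
    ultimately show ?thesis using r by (auto simp: subst_upd_fresh)
  next
    fix e' assume e': "step e a e'" "alpha_equiv r0 (subst (\<sigma>(v := Var w)) e')"
    have "step (Mu v e) a (subst (Var(v := Mu v e)) e')" using e'(1) by (rule step.intros)
    moreover have "alpha_equiv r (subst \<sigma> (subst (Var(v := Mu v e)) e'))"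
      unfolding r by (rule alpha_equiv_subst_unfold[OF w step_fv[OF e'(1)] e'(2)])
    ultimately show ?thesis by blast
  qed
qed auto

lemma db_singleton_eq_fv: "db [v] e = db [w] f \<Longrightarrow> fv e - {v} = fv f - {w}"
  by (metis lfv_db empty_set list.simps(15))

lemma alpha_equiv_rename_bound:
  assumes "db [v] e = db [w] f"
  shows "alpha_equiv e (subst (Var(w := Var v)) f)"
proof -
  have "db [v] (subst (Var(w := Var v)) f) = lsubst (\<lambda>u. db [] ((Var(w := Var v)) u)) (db [w] f)"
    by (rule db_subst) (use db_singleton_eq_fv[OF assms] in auto)
  also have "\<dots> = db [w] f"
    by (rule lsubst_LFree) (auto simp: lfv_db)
  finally have "db [v] e = db [v] (subst (Var(w := Var v)) f)"
    using assms by simp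
  then show ?thesis
    unfolding alpha_equiv_def by (rule db_singleton_eqD)
qed

lemma alpha_equiv_step:
  "step x a x' \<Longrightarrow> alpha_equiv x y \<Longrightarrow> \<exists>y'. step y a y' \<and> alpha_equiv x' y'"
proof (induct arbitrary: y rule: step.induct)
  case (1 a e)
  then show ?case by (cases y) (auto simp: alpha_equiv_def)
next
  case (2 e a e' f)
  then show ?case by (cases y) (auto simp: alpha_equiv_def)
next
  case (3 f a f' e)
  then show ?case by (cases y) (auto simp: alpha_equiv_def)
next
  case (4 e a e' v)
  obtain w f where y: "y = Mu w f" and ef: "db [v] e = db [w] f"
    using 4(3) by (cases y) (auto simp: alpha_equiv_def)
  let ?\<tau> = "Var(w := Var v)"
  obtain y0' where y0': "step (subst ?\<tau> f) a y0'" "alpha_equiv e' y0'"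
    using 4(2) alpha_equiv_rename_bound[OF ef] by blast
  obtain f' where f': "step f a f'" "alpha_equiv y0' (subst ?\<tau> f')"
    using step_subst_cases[OF y0'(1)] by (auto split: if_splits)
  have "step y a (subst (Var(w := Mu w f)) f')"
    unfolding y using f'(1) by (rule step.intros)
  moreover have "alpha_equiv (subst (Var(v := Mu v e)) e') (subst (Var(v := Mu w f)) (subst ?\<tau> f'))"
    using y0'(2) f'(2) ef by (intro alpha_equiv_subst) (auto simp: alpha_equiv_def)
  moreover have "alpha_equiv (subst (Var(v := Mu w f)) (subst ?\<tau> f'))
      (subst (\<lambda>u. subst (Var(v := Mu w f)) (?\<tau> u)) f')"
    by (rule alpha_equiv_subst_subst)
  moreover have "subst (\<lambda>u. subst (Var(v := Mu w f)) (?\<tau> u)) f' = subst (Var(w := Mu w f)) f'"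
    by (rule subst_cong) (use step_fv[OF f'(1)] db_singleton_eq_fv[OF ef] in auto)
  ultimately show ?case unfolding alpha_equiv_def by auto
qed

section \<open>Approximate bisimilarity\<close>

fun kbisim :: "nat \<Rightarrow> 'a exp \<Rightarrow> 'a exp \<Rightarrow> bool" where
  "kbisim 0 x y \<longleftrightarrow> True"
| "kbisim (Suc k) x y \<longleftrightarrow> (\<forall>v. out x v \<longleftrightarrow> out y v)
     \<and> (\<forall>a x'. step x a x' \<longrightarrow> (\<exists>y'. step y a y' \<and> kbisim k x' y'))
     \<and> (\<forall>a y'. step y a y' \<longrightarrow> (\<exists>x'. step x a x' \<and> kbisim k x' y'))"

lemma kbisim_refl: "kbisim k x x"
  by (induct k arbitrary: x) auto

lemma kbisim_sym: "kbisim k x y \<Longrightarrow> kbisim k y x"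
proof (induct k arbitrary: x y)
  case (Suc k)
  show ?case unfolding kbisim.simps
  proof (intro conjI allI impI)
    fix v show "out y v \<longleftrightarrow> out x v" using Suc.prems by simp
  next
    fix a y' assume "step y a y'"
    then obtain x' where "step x a x'" "kbisim k x' y'" using Suc.prems by (simp only: kbisim.simps) blast
    then show "\<exists>x'. step x a x' \<and> kbisim k y' x'" using Suc.hyps by blast
  next
    fix a x' assume "step x a x'"
    then obtain y' where "step y a y'" "kbisim k x' y'" using Suc.prems by (simp only: kbisim.simps) blast
    then show "\<exists>y'. step y a y' \<and> kbisim k y' x'" using Suc.hyps by blast
  qed
qed simp

lemma kbisim_trans [trans]: "kbisim k x y \<Longrightarrow> kbisim k y z \<Longrightarrow> kbisim k x z"
proof (induct k arbitrary: x y z)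
  case (Suc k)
  show ?case unfolding kbisim.simps
  proof (intro conjI allI impI)
    fix v show "out x v \<longleftrightarrow> out z v" using Suc.prems by simp
  next
    fix a x' assume "step x a x'"
    then obtain y' where "step y a y'" "kbisim k x' y'" using Suc.prems(1) by (simp only: kbisim.simps) blast
    moreover from this(1) obtain z' where "step z a z'" "kbisim k y' z'" using Suc.prems(2) by (simp only: kbisim.simps) blast
    ultimately show "\<exists>z'. step z a z' \<and> kbisim k x' z'" using Suc.hyps by blast
  next
    fix a z' assume "step z a z'"
    then obtain y' where "step y a y'" "kbisim k y' z'" using Suc.prems(2) by (simp only: kbisim.simps) blast
    moreover from this(1) obtain x' where "step x a x'" "kbisim k x' y'" using Suc.prems(1) by (simp only: kbisim.simps) blast
    ultimately show "\<exists>x'. step x a x' \<and> kbisim k x' z'" using Suc.hyps by blast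
  qed
qed simp

lemma kbisim_SucD: "kbisim (Suc k) x y \<Longrightarrow> kbisim k x y"
proof (induct k arbitrary: x y)
  case (Suc k)
  show ?case unfolding kbisim.simps(2)[of k x y]
  proof (intro conjI allI impI)
    fix v show "out x v \<longleftrightarrow> out y v" using Suc.prems by simp
  next
    fix a x' assume "step x a x'"
    then obtain y' where "step y a y'" "kbisim (Suc k) x' y'" using Suc.prems unfolding kbisim.simps(2)[of "Suc k" x y] by blast
    then show "\<exists>y'. step y a y' \<and> kbisim k x' y'" using Suc.hyps by blast
  next
    fix a y' assume "step y a y'"
    then obtain x' where "step x a x'" "kbisim (Suc k) x' y'" using Suc.prems unfolding kbisim.simps(2)[of "Suc k" x y] by blast
    then show "\<exists>x'. step x a x' \<and> kbisim k x' y'" using Suc.hyps by blast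
  qed
qed simp

lemma kbisim_antimono: "j \<le> k \<Longrightarrow> kbisim k x y \<Longrightarrow> kbisim j x y"
  by (induct k) (auto simp: le_Suc_eq simp del: kbisim.simps(2) dest: kbisim_SucD)

lemma alpha_equiv_imp_kbisim: "alpha_equiv x y \<Longrightarrow> kbisim k x y"
proof (induct k arbitrary: x y)
  case (Suc k)
  have yx: "alpha_equiv y x" using Suc.prems by (simp add: alpha_equiv_def)
  show ?case unfolding kbisim.simps
  proof (intro conjI allI impI)
    fix v show "out x v \<longleftrightarrow> out y v" using Suc.prems by (rule alpha_equiv_out)
  next
    fix a x' assume "step x a x'"
    from alpha_equiv_step[OF this Suc.prems] obtain y' where "step y a y'" "alpha_equiv x' y'"
      by blast
    then show "\<exists>y'. step y a y' \<and> kbisim k x' y'" using Suc.hyps by blast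
  next
    fix a y' assume "step y a y'"
    from alpha_equiv_step[OF this yx] obtain x' where "step x a x'" "alpha_equiv y' x'"
      by blast
    moreover from this(2) have "alpha_equiv x' y'" by (simp add: alpha_equiv_def)
    ultimately show "\<exists>x'. step x a x' \<and> kbisim k x' y'" using Suc.hyps by blast
  qed
qed simp

lemma kbisim_subst_step:
  assumes IH: "\<And>s' t'. kbisim k s' t' \<Longrightarrow> kbisim k (subst \<sigma> s') (subst \<tau> t')"
    and st: "kbisim (Suc k) s t" and \<sigma>\<tau>: "\<And>u. kbisim (Suc k) (\<sigma> u) (\<tau> u)"
    and r: "step (subst \<sigma> s) a r"
  shows "\<exists>r'. step (subst \<tau> t) a r' \<and> kbisim k r r'"
  using step_subst_cases[OF r]
proof (elim disjE exE conjE)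
  fix u assume u: "out s u" "step (\<sigma> u) a r"
  have "out t u" using st[unfolded kbisim.simps] u(1) by blast
  moreover obtain r' where "step (\<tau> u) a r'" "kbisim k r r'"
    using \<sigma>\<tau>[of u, unfolded kbisim.simps] u(2) by blast
  ultimately show ?thesis using step_subst_of_out[of t u \<tau> a] by blast
next
  fix s' assume s': "step s a s'" "alpha_equiv r (subst \<sigma> s')"
  obtain t' where t': "step t a t'" "kbisim k s' t'"
    using st[unfolded kbisim.simps] s'(1) by blast
  obtain r' where r': "step (subst \<tau> t) a r'" "alpha_equiv r' (subst \<tau> t')"
    using step_subst_of_step[OF t'(1), of \<tau>] by blast
  have "kbisim k r (subst \<sigma> s')" using s'(2) by (rule alpha_equiv_imp_kbisim)
  also have "kbisim k (subst \<sigma> s') (subst \<tau> t')" using t'(2) by (rule IH)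
  also have "kbisim k (subst \<tau> t') r'"
    using r'(2) by (intro alpha_equiv_imp_kbisim) (simp add: alpha_equiv_def)
  finally show ?thesis using r'(1) by blast
qed

lemma kbisim_subst:
  "kbisim k s t \<Longrightarrow> (\<And>u. kbisim k (\<sigma> u) (\<tau> u)) \<Longrightarrow> kbisim k (subst \<sigma> s) (subst \<tau> t)"
proof (induct k arbitrary: s t \<sigma> \<tau>)
  case (Suc k)
  have \<sigma>\<tau>: "\<And>s' t'. kbisim k s' t' \<Longrightarrow> kbisim k (subst \<sigma> s') (subst \<tau> t')"
    using Suc.hyps Suc.prems(2) kbisim_SucD by blast
  have \<tau>\<sigma>: "\<And>s' t'. kbisim k s' t' \<Longrightarrow> kbisim k (subst \<tau> s') (subst \<sigma> t')"
    using \<sigma>\<tau> kbisim_sym by blast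
  show ?case unfolding kbisim.simps(2)[of k]
  proof (intro conjI allI impI)
    fix v show "out (subst \<sigma> s) v \<longleftrightarrow> out (subst \<tau> t) v"
      using Suc.prems by (simp add: out_subst)
  next
    fix a r assume "step (subst \<sigma> s) a r"
    then show "\<exists>r'. step (subst \<tau> t) a r' \<and> kbisim k r r'"
      using kbisim_subst_step[OF \<sigma>\<tau> Suc.prems] by blast
  next
    fix a r' assume "step (subst \<tau> t) a r'"
    then have "\<exists>r. step (subst \<sigma> s) a r \<and> kbisim k r' r"
      using kbisim_subst_step[OF \<tau>\<sigma> kbisim_sym[OF Suc.prems(1)] kbisim_sym[OF Suc.prems(2)]] by blast
    then show "\<exists>r. step (subst \<sigma> s) a r \<and> kbisim k r r'"
      using kbisim_sym by blast
  qed
qed simp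

definition depth_dist :: "'a exp \<Rightarrow> 'a exp \<Rightarrow> real" where
  "depth_dist x y = (if \<forall>k. kbisim k x y then 0 else (1/2) ^ (LEAST k. \<not> kbisim (Suc k) x y))"

lemma depth_dist_eq_power:
  assumes "\<not> (\<forall>k. kbisim k x y)"
  obtains n where "\<not> kbisim (Suc n) x y" "kbisim n x y" "depth_dist x y = (1/2) ^ n"
proof -
  obtain k where "\<not> kbisim k x y" using assms by blast
  then have m: "\<not> kbisim (Suc k) x y" using kbisim_SucD by blast
  define n where "n = (LEAST k. \<not> kbisim (Suc k) x y)"
  have "\<not> kbisim (Suc n) x y" unfolding n_def using m by (rule LeastI)
  moreover have "kbisim n x y"
  proof (cases n)
    case (Suc p)
    then have "p < n" by simp
    then have "\<not> \<not> kbisim (Suc p) x y" unfolding n_def by (rule not_less_Least)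
    then show ?thesis using Suc by simp
  qed simp
  moreover have "depth_dist x y = (1/2) ^ n" unfolding depth_dist_def n_def using assms by simp
  ultimately show thesis by (rule that)
qed

lemma depth_dist_le_iff: "depth_dist x y \<le> (1/2) ^ k \<longleftrightarrow> kbisim k x y"
proof (cases "\<forall>k. kbisim k x y")
  case False
  then obtain n where n: "\<not> kbisim (Suc n) x y" "kbisim n x y" "depth_dist x y = (1/2) ^ n"
    by (rule depth_dist_eq_power)
  have "kbisim k x y \<longleftrightarrow> k \<le> n"
  proof
    assume "kbisim k x y"
    then show "k \<le> n" using n(1) kbisim_antimono[of "Suc n" k] by (meson not_less_eq_eq)
  qed (use n(2) kbisim_antimono in blast)
  then show ?thesis using n(3) by (simp add: power_decreasing_iff)
qed (simp add: depth_dist_def)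

lemma depth_dist_ge: "\<not> kbisim (Suc j) x y \<Longrightarrow> (1/2) ^ j \<le> depth_dist x y"
proof -
  assume j: "\<not> kbisim (Suc j) x y"
  then obtain n where n: "kbisim n x y" "depth_dist x y = (1/2) ^ n"
    by (metis depth_dist_eq_power)
  have "n \<le> j" using j n(1) kbisim_antimono[of "Suc j" n] by (meson not_less_eq_eq)
  then show ?thesis using n(2) by (simp add: power_decreasing)
qed

lemma depth_dist_nonneg: "0 \<le> depth_dist x y"
  by (simp add: depth_dist_def)

lemma depth_dist_le_one: "depth_dist x y \<le> 1"
  using depth_dist_le_iff[of x y 0] by simp

lemma depth_dist_self: "depth_dist x x = 0"
  by (simp add: depth_dist_def kbisim_refl)

lemma depth_dist_commute: "depth_dist x y = depth_dist y x"
proof -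
  have "kbisim k x y \<longleftrightarrow> kbisim k y x" for k using kbisim_sym by blast
  then show ?thesis unfolding depth_dist_def by simp
qed

lemma depth_dist_leI:
  assumes "\<And>k. kbisim k x y \<Longrightarrow> kbisim k x' y'"
  shows "depth_dist x' y' \<le> depth_dist x y"
proof (cases "\<forall>k. kbisim k x y")
  case True
  then show ?thesis using assms by (simp add: depth_dist_def)
next
  case False
  then obtain n where "kbisim n x y" "depth_dist x y = (1/2) ^ n"
    by (rule depth_dist_eq_power)
  then show ?thesis using assms[of n] depth_dist_le_iff[of x' y' n] by simp
qed

lemma depth_dist_ultrametric: "depth_dist x z \<le> max (depth_dist x y) (depth_dist y z)"
proof -
  have "depth_dist x z \<le> depth_dist x y" if yz: "depth_dist y z \<le> depth_dist x y"
  proof (rule depth_dist_leI)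
    fix k assume "kbisim k x y"
    moreover from this have "kbisim k y z"
      using yz depth_dist_le_iff[of x y k] depth_dist_le_iff[of y z k] by simp
    ultimately show "kbisim k x z" by (rule kbisim_trans)
  qed
  moreover have "depth_dist x z \<le> depth_dist y z" if xy: "depth_dist x y \<le> depth_dist y z"
  proof (rule depth_dist_leI)
    fix k assume "kbisim k y z"
    moreover from this have "kbisim k x y"
      using xy depth_dist_le_iff[of x y k] depth_dist_le_iff[of y z k] by simp
    ultimately show "kbisim k x z" by (rule kbisim_trans[rotated])
  qed
  ultimately show ?thesis by linarith
qed

lemma depth_dist_cong:
  assumes "\<And>k. kbisim k x x'" and "\<And>k. kbisim k y y'"
  shows "depth_dist x y = depth_dist x' y'"
proof -
  have "kbisim k x y \<longleftrightarrow> kbisim k x' y'" for k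
    using assms[of k] kbisim_sym kbisim_trans by meson
  then show ?thesis unfolding depth_dist_def by simp
qed

lemma bisimulationD:
  "bisimulation R \<Longrightarrow> (x, y) \<in> R \<Longrightarrow> (\<forall>v. out x v \<longleftrightarrow> out y v)
    \<and> (\<forall>a x'. step x a x' \<longrightarrow> (\<exists>y'. step y a y' \<and> (x', y') \<in> R))
    \<and> (\<forall>a y'. step y a y' \<longrightarrow> (\<exists>x'. step x a x' \<and> (x', y') \<in> R))"
  unfolding bisimulation_def by blast

lemma bisimulation_Id: "bisimulation Id"
  unfolding bisimulation_def by auto

lemma bisimulation_converse: "bisimulation R \<Longrightarrow> bisimulation (R\<inverse>)"
  unfolding bisimulation_def by (auto 0 3)

lemma bisimulation_relcomp:
  assumes R: "bisimulation R" and S: "bisimulation S"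
  shows "bisimulation (R O S)"
  unfolding bisimulation_def
proof (intro ballI, clarify, intro conjI allI impI)
  fix p q r assume pq: "(p, q) \<in> R" and qr: "(q, r) \<in> S"
  note A = bisimulationD[OF R pq] and B = bisimulationD[OF S qr]
  fix v show "out p v \<longleftrightarrow> out r v" using A B by blast
next
  fix p q r a p' assume pq: "(p, q) \<in> R" and qr: "(q, r) \<in> S" and "step p a p'"
  then obtain q' where q': "step q a q'" "(p', q') \<in> R" using bisimulationD[OF R pq] by blast
  then obtain r' where "step r a r'" "(q', r') \<in> S" using bisimulationD[OF S qr] by blast
  then show "\<exists>r'. step r a r' \<and> (p', r') \<in> R O S" using q' by blast
next
  fix p q r a r' assume pq: "(p, q) \<in> R" and qr: "(q, r) \<in> S" and "step r a r'"
  then obtain q' where q': "step q a q'" "(q', r') \<in> S" using bisimulationD[OF S qr] by blast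
  then obtain p' where "step p a p'" "(p', q') \<in> R" using bisimulationD[OF R pq] by blast
  then show "\<exists>p'. step p a p' \<and> (p', r') \<in> R O S" using q' by blast
qed

lemma bisim_refl: "bisim x x"
  unfolding bisim_def using bisimulation_Id by blast

lemma bisim_sym: "bisim x y \<Longrightarrow> bisim y x"
  unfolding bisim_def using bisimulation_converse by blast

lemma bisim_trans: "bisim x y \<Longrightarrow> bisim y z \<Longrightarrow> bisim x z"
  unfolding bisim_def using bisimulation_relcomp by blast

lemma bisim_unfold:
  assumes "bisim x y"
  shows "(\<forall>v. out x v \<longleftrightarrow> out y v)
    \<and> (\<forall>a x'. step x a x' \<longrightarrow> (\<exists>y'. step y a y' \<and> bisim x' y'))
    \<and> (\<forall>a y'. step y a y' \<longrightarrow> (\<exists>x'. step x a x' \<and> bisim x' y'))"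
proof -
  obtain R where R: "bisimulation R" "(x, y) \<in> R" using assms unfolding bisim_def by blast
  then have "R \<subseteq> {(x, y). bisim x y}" unfolding bisim_def by blast
  then show ?thesis using bisimulationD[OF R] by blast
qed

lemma bisim_imp_kbisim: "bisim x y \<Longrightarrow> kbisim k x y"
proof (induct k arbitrary: x y)
  case (Suc k)
  then show ?case using bisim_unfold[OF Suc.prems] by (simp only: kbisim.simps) blast
qed simp

lemma mem_cls: "e \<in> cls x \<longleftrightarrow> bisim x e"
  unfolding cls_def by simp

lemma cls_eq_iff: "cls x = cls y \<longleftrightarrow> bisim x y"
  unfolding cls_def using bisim_refl bisim_sym bisim_trans by blast

lemma cls_in_Q: "cls x \<in> Q"
  unfolding Q_def by simp

lemma beta_cls: "beta (cls x) = {Inl (a, cls x') | a x'. step x a x'} \<union> {Inr v | v. out x v}"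
proof (intro equalityI subsetI)
  fix p assume "p \<in> beta (cls x)"
  then consider (step) a e e' where "p = Inl (a, cls e')" "bisim x e" "step e a e'"
    | (out) v e where "p = Inr v" "bisim x e" "out e v"
    unfolding beta_def mem_cls by blast
  then show "p \<in> {Inl (a, cls x') | a x'. step x a x'} \<union> {Inr v | v. out x v}"
  proof cases
    case step
    then obtain x' where "step x a x'" "bisim x' e'" using bisim_unfold[OF step(2)] by blast
    then show ?thesis using step(1) cls_eq_iff by blast
  next
    case out
    then show ?thesis using bisim_unfold[OF out(2)] by blast
  qed
qed (auto simp: beta_def mem_cls bisim_refl)

definition class_dist :: "'a exp set \<Rightarrow> 'a exp set \<Rightarrow> real" where
  "class_dist X Y =
    (if X \<in> Q \<and> Y \<in> Q then depth_dist (SOME x. X = cls x) (SOME y. Y = cls y) else 0)"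

lemma class_dist_cls: "class_dist (cls x) (cls y) = depth_dist x y"
proof -
  have "bisim z (SOME z'. cls z = cls z')" for z :: "'a exp"
    using someI[of "\<lambda>z'. cls z = cls z'" z] cls_eq_iff by blast
  then have "depth_dist (SOME x'. cls x = cls x') (SOME y'. cls y = cls y') = depth_dist x y"
    by (intro depth_dist_cong[symmetric] bisim_imp_kbisim)
  then show ?thesis unfolding class_dist_def by (simp add: cls_in_Q)
qed

lemma Q_cases [cases set: Q]:
  assumes "X \<in> Q"
  obtains x where "X = cls x"
  using assms unfolding Q_def by blast

definition unit_bounded_on :: "'c set \<Rightarrow> ('c \<Rightarrow> 'c \<Rightarrow> real) \<Rightarrow> bool" where
  "unit_bounded_on C \<delta> \<longleftrightarrow> (\<forall>p\<in>C. \<forall>q\<in>C. 0 \<le> \<delta> p q \<and> \<delta> p q \<le> 1)"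

lemma unit_bounded_on_subset: "unit_bounded_on C \<delta> \<Longrightarrow> D \<subseteq> C \<Longrightarrow> unit_bounded_on D \<delta>"
  unfolding unit_bounded_on_def by blast

lemma hausdorff_commute: "hausdorff \<delta> A B = hausdorff \<delta> B A"
  unfolding hausdorff_def by (rule max.commute)

lemma inf1_le:
  assumes "q \<in> B" and "\<forall>q\<in>B. 0 \<le> f q" and "f q \<le> c"
  shows "inf1 (f ` B) \<le> c"
proof -
  have "Inf (f ` B) \<le> f q" by (rule cInf_lower) (use assms in \<open>auto intro: bdd_belowI2\<close>)
  then show ?thesis unfolding inf1_def using assms by auto
qed

lemma inf1_ge: "\<forall>q\<in>B. c \<le> f q \<Longrightarrow> c \<le> 1 \<Longrightarrow> c \<le> inf1 (f ` B)"
  unfolding inf1_def by (auto intro: cInf_greatest)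

lemma sup0_le: "\<forall>p\<in>A. f p \<le> c \<Longrightarrow> 0 \<le> c \<Longrightarrow> sup0 (f ` A) \<le> c"
  unfolding sup0_def by (auto intro: cSup_least)

lemma sup0_ge:
  assumes "p \<in> A" and "\<forall>p\<in>A. f p \<le> 1" and "c \<le> f p"
  shows "c \<le> sup0 (f ` A)"
proof -
  have "f p \<le> Sup (f ` A)" by (rule cSup_upper) (use assms in \<open>auto intro: bdd_aboveI2\<close>)
  then show ?thesis unfolding sup0_def using assms by auto
qed

lemma inf1_le_one: "\<forall>q\<in>B. 0 \<le> f q \<and> f q \<le> 1 \<Longrightarrow> inf1 (f ` B) \<le> 1"
proof (cases "B = {}")
  case False
  then obtain q where "q \<in> B" by blast
  moreover assume "\<forall>q\<in>B. 0 \<le> f q \<and> f q \<le> 1"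
  ultimately show ?thesis by (intro inf1_le[of q]) auto
qed (simp add: inf1_def)

lemma hausdorff_half_le:
  assumes "unit_bounded_on (A \<union> B) \<delta>" and "0 \<le> c" and "\<forall>p\<in>A. \<exists>q\<in>B. \<delta> p q \<le> c"
  shows "sup0 ((\<lambda>x. inf1 ((\<lambda>y. \<delta> x y) ` B)) ` A) \<le> c"
proof (rule sup0_le[OF _ \<open>0 \<le> c\<close>], rule ballI)
  fix p assume p: "p \<in> A"
  then obtain q where "q \<in> B" "\<delta> p q \<le> c" using assms(3) by blast
  then show "inf1 ((\<lambda>y. \<delta> p y) ` B) \<le> c"
    using assms(1) p unfolding unit_bounded_on_def by (intro inf1_le[of q]) auto
qed

lemma hausdorff_le:
  assumes "unit_bounded_on (A \<union> B) \<delta>" and "0 \<le> c"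
    and "\<forall>p\<in>A. \<exists>q\<in>B. \<delta> p q \<le> c" and "\<forall>q\<in>B. \<exists>p\<in>A. \<delta> q p \<le> c"
  shows "hausdorff \<delta> A B \<le> c"
  using hausdorff_half_le[of A B \<delta> c] hausdorff_half_le[of B A \<delta> c] assms
  unfolding hausdorff_def by (simp add: Un_commute)

lemma hausdorff_le_one: "unit_bounded_on (A \<union> B) \<delta> \<Longrightarrow> hausdorff \<delta> A B \<le> 1"
  unfolding hausdorff_def unit_bounded_on_def by (auto intro!: sup0_le inf1_le_one)

lemma hausdorff_ge:
  assumes "unit_bounded_on (A \<union> B) \<delta>" and "p \<in> A" and "\<forall>q\<in>B. c \<le> \<delta> p q" and "c \<le> 1"
  shows "c \<le> hausdorff \<delta> A B"
proof -
  have "c \<le> sup0 ((\<lambda>x. inf1 ((\<lambda>y. \<delta> x y) ` B)) ` A)"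
  proof (rule sup0_ge[OF \<open>p \<in> A\<close>])
    show "\<forall>p\<in>A. inf1 ((\<lambda>y. \<delta> p y) ` B) \<le> 1"
      using assms(1) unfolding unit_bounded_on_def by (auto intro!: inf1_le_one)
    show "c \<le> inf1 ((\<lambda>y. \<delta> p y) ` B)" using assms(3,4) by (rule inf1_ge)
  qed
  then show ?thesis unfolding hausdorff_def by simp
qed

lemma hausdorff_nonneg: "unit_bounded_on (A \<union> B) \<delta> \<Longrightarrow> 0 \<le> hausdorff \<delta> A B"
proof (cases "A = {}")
  case False
  then obtain p where "p \<in> A" by blast
  moreover assume "unit_bounded_on (A \<union> B) \<delta>"
  ultimately show ?thesis
    by (intro hausdorff_ge[of A B \<delta> p]) (auto simp: unit_bounded_on_def)
qed (simp add: hausdorff_def sup0_def)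

section \<open>The depth distance is the least fixpoint\<close>

lemma lift_simps [simp]:
  "lift d (Inl (a, X)) (Inl (b, Y)) = (if a = b then d X Y / 2 else 1)"
  "lift d (Inl p) (Inr v) = 1"
  "lift d (Inr v) (Inl p) = 1"
  "lift d (Inr v) (Inr w) = (if v = w then 0 else 1)"
  by (auto simp: lift_def split: prod.splits)

lemma beta_subset: "beta X \<subseteq> (UNIV \<times> Q) <+> UNIV"
  unfolding beta_def Q_def by auto

lemma unit_bounded_on_lift_beta:
  assumes "unit_bounded_on Q d"
  shows "unit_bounded_on (beta X \<union> beta Y) (lift d)"
proof -
  have "unit_bounded_on ((UNIV \<times> Q) <+> UNIV) (lift d)"
    using assms unfolding unit_bounded_on_def by fastforce
  then show ?thesis by (rule unit_bounded_on_subset) (use beta_subset in blast)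
qed

lemma Phi_commute: "Phi d X Y = Phi d Y X"
  unfolding Phi_def by (rule hausdorff_commute)

lemma pseudometric_on_imp_unit_bounded_on: "pseudometric_on X d \<Longrightarrow> unit_bounded_on X d"
  unfolding pseudometric_on_def unit_bounded_on_def by blast

lemma pseudometric_on_class_dist: "pseudometric_on Q (class_dist :: 'a exp set \<Rightarrow> _)"
  unfolding pseudometric_on_def
proof (intro ballI)
  fix X Y :: "'a exp set" assume "X \<in> Q" "Y \<in> Q"
  then obtain x y where xy: "X = cls x" "Y = cls y" by (metis Q_cases)
  show "0 \<le> class_dist X Y \<and> class_dist X Y \<le> 1 \<and> class_dist X X = 0
      \<and> class_dist X Y = class_dist Y X \<and> (\<forall>Z\<in>Q. class_dist X Z \<le> class_dist X Y + class_dist Y Z)"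
  proof (intro conjI ballI)
    fix Z :: "'a exp set" assume "Z \<in> Q"
    then obtain z where z: "Z = cls z" by (rule Q_cases)
    show "class_dist X Z \<le> class_dist X Y + class_dist Y Z"
      using depth_dist_ultrametric[of x z y] depth_dist_nonneg[of x y] depth_dist_nonneg[of y z]
      unfolding xy z class_dist_cls by linarith
  qed (auto simp: xy class_dist_cls depth_dist_nonneg depth_dist_le_one depth_dist_self
      depth_dist_commute)
qed

lemma lift_class_dist_match:
  assumes "kbisim (Suc k) x y" and "p \<in> beta (cls x)"
  shows "\<exists>q\<in>beta (cls y). lift class_dist p q \<le> (1/2) ^ Suc k"
proof -
  consider (step) a x' where "p = Inl (a, cls x')" "step x a x'" | (out) v where "p = Inr v" "out x v"
    using assms(2) unfolding beta_cls by blast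
  then show ?thesis
  proof cases
    case step
    then obtain y' where "step y a y'" "kbisim k x' y'"
      using assms(1)[unfolded kbisim.simps] by blast
    then show ?thesis
      using step(1) depth_dist_le_iff[of x' y' k]
      by (intro bexI[of _ "Inl (a, cls y')"]) (auto simp: beta_cls class_dist_cls)
  next
    case out
    then show ?thesis using assms(1) by (intro bexI[of _ "Inr v"]) (auto simp: beta_cls)
  qed
qed

lemma unit_bounded_on_lift_class_dist:
  "unit_bounded_on (beta X \<union> beta Y) (lift (class_dist :: 'a exp set \<Rightarrow> _))"
  by (intro unit_bounded_on_lift_beta pseudometric_on_imp_unit_bounded_on pseudometric_on_class_dist)

lemma Phi_class_dist_le: "kbisim k x y \<Longrightarrow> Phi class_dist (cls x) (cls y) \<le> (1/2) ^ k"
proof (cases k)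
  case 0
  then show ?thesis
    unfolding Phi_def using hausdorff_le_one[OF unit_bounded_on_lift_class_dist] by simp
next
  case (Suc j)
  assume "kbisim k x y"
  then have xy: "kbisim (Suc j) x y" unfolding Suc .
  note yx = kbisim_sym[OF xy]
  show ?thesis unfolding Phi_def Suc
    using xy yx by (intro hausdorff_le[OF unit_bounded_on_lift_class_dist] lift_class_dist_match ballI)
      simp_all
qed

definition unmatched_move :: "nat \<Rightarrow> 'a exp \<Rightarrow> 'a exp \<Rightarrow> bool" where
  "unmatched_move k x y \<longleftrightarrow> (\<exists>v. out x v \<and> \<not> out y v)
    \<or> (\<exists>a x'. step x a x' \<and> (\<forall>y'. step y a y' \<longrightarrow> \<not> kbisim k x' y'))"

lemma not_kbisim_Suc_iff: "\<not> kbisim (Suc k) x y \<longleftrightarrow> unmatched_move k x y \<or> unmatched_move k y x"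
  unfolding unmatched_move_def kbisim.simps(2) using kbisim_sym by blast

lemma Phi_ge_unmatched_move:
  assumes d: "unit_bounded_on Q d"
    and H: "\<And>x' y'. \<not> kbisim k x' y' \<Longrightarrow> (1/2) ^ k \<le> d (cls x') (cls y') / 2"
    and "unmatched_move k x y"
  shows "(1/2) ^ k \<le> Phi d (cls x) (cls y)"
proof -
  note bounded = unit_bounded_on_lift_beta[OF d, of "cls x" "cls y"]
  have le_one: "(1/2::real) ^ k \<le> 1" by (simp add: power_le_one)
  consider (out) v where "out x v" "\<not> out y v"
    | (step) a x' where "step x a x'" "\<forall>y'. step y a y' \<longrightarrow> \<not> kbisim k x' y'"
    using assms(3) unfolding unmatched_move_def by blast
  then show ?thesis
  proof cases
    case out
    have "\<forall>q\<in>beta (cls y). (1/2) ^ k \<le> lift d (Inr v) q"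
      using out(2) le_one by (auto simp: beta_cls)
    then show ?thesis
      unfolding Phi_def using out(1) le_one by (intro hausdorff_ge[OF bounded]) (auto simp: beta_cls)
  next
    case step
    have "\<forall>q\<in>beta (cls y). (1/2) ^ k \<le> lift d (Inl (a, cls x')) q"
      using step(2) le_one H by (auto simp: beta_cls)
    then show ?thesis
      unfolding Phi_def using step(1) le_one by (intro hausdorff_ge[OF bounded]) (auto simp: beta_cls)
  qed
qed

lemma Phi_ge_not_kbisim:
  assumes "unit_bounded_on Q d"
    and "\<And>x' y'. \<not> kbisim k x' y' \<Longrightarrow> (1/2) ^ k \<le> d (cls x') (cls y') / 2"
    and "\<not> kbisim (Suc k) x y"
  shows "(1/2) ^ k \<le> Phi d (cls x) (cls y)"
  using assms(3) Phi_ge_unmatched_move[OF assms(1,2)] Phi_commute[of d]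
  unfolding not_kbisim_Suc_iff by metis

lemma Phi_class_dist_cls: "Phi class_dist (cls x) (cls y) = class_dist (cls x) (cls y)"
proof (cases "\<forall>k. kbisim k x y")
  case True
  have "Phi class_dist (cls x) (cls y) \<le> 0"
  proof (rule ccontr)
    assume "\<not> ?thesis"
    then obtain n where "(1/2::real) ^ n < Phi class_dist (cls x) (cls y)"
      using real_arch_pow_inv[of _ "1/2"] by fastforce
    then show False using Phi_class_dist_le[of n x y] True by simp
  qed
  moreover have "0 \<le> Phi class_dist (cls x) (cls y)"
    unfolding Phi_def by (rule hausdorff_nonneg[OF unit_bounded_on_lift_class_dist])
  ultimately show ?thesis using True by (simp add: class_dist_cls depth_dist_def)
next
  case False
  then obtain n where n: "\<not> kbisim (Suc n) x y" "kbisim n x y" "depth_dist x y = (1/2) ^ n"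
    by (rule depth_dist_eq_power)
  have "(1/2) ^ n \<le> Phi class_dist (cls x) (cls y)"
  proof (rule Phi_ge_not_kbisim[OF _ _ n(1)])
    show "unit_bounded_on Q class_dist"
      by (rule pseudometric_on_imp_unit_bounded_on[OF pseudometric_on_class_dist])
  next
    fix x' y' assume "\<not> kbisim n x' y'"
    then obtain m where "n = Suc m" "\<not> kbisim (Suc m) x' y'" by (cases n) auto
    then show "(1/2) ^ n \<le> class_dist (cls x') (cls y') / 2"
      using depth_dist_ge[of m x' y'] by (simp add: class_dist_cls)
  qed
  moreover have "Phi class_dist (cls x) (cls y) \<le> (1/2) ^ n"
    using n(2) by (rule Phi_class_dist_le)
  ultimately show ?thesis using n(3) by (simp add: class_dist_cls)
qed

lemma class_dist_le_fixpoint: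
  assumes pm: "pseudometric_on Q d" and fixpoint: "\<forall>X\<in>Q. \<forall>Y\<in>Q. Phi d X Y = d X Y"
  shows "class_dist (cls x) (cls y) \<le> d (cls x) (cls y)"
proof -
  have bounded: "unit_bounded_on Q d" using pm by (rule pseudometric_on_imp_unit_bounded_on)
  have lower: "\<not> kbisim (Suc k) x' y' \<Longrightarrow> (1/2) ^ k \<le> d (cls x') (cls y')" for k x' y'
  proof (induct k arbitrary: x' y')
    case (Suc k)
    have "(1/2) ^ Suc k \<le> Phi d (cls x') (cls y')"
      by (rule Phi_ge_not_kbisim[OF bounded _ Suc.prems]) (use Suc.hyps in simp)
    then show ?case using fixpoint cls_in_Q by metis
  next
    case 0
    have "(1/2) ^ 0 \<le> Phi d (cls x') (cls y')"
      by (rule Phi_ge_not_kbisim[OF bounded _ 0]) simp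
    then show ?case using fixpoint cls_in_Q by metis
  qed
  show ?thesis
  proof (cases "\<forall>k. kbisim k x y")
    case True
    then show ?thesis
      using bounded by (simp add: class_dist_cls depth_dist_def unit_bounded_on_def cls_in_Q)
  next
    case False
    then obtain n where "\<not> kbisim (Suc n) x y" "depth_dist x y = (1/2) ^ n"
      by (rule depth_dist_eq_power)
    then show ?thesis using lower by (simp add: class_dist_cls)
  qed
qed

lemma bd_eqI:
  assumes "pseudometric_on Q d" and "\<forall>X\<in>Q. \<forall>Y\<in>Q. Phi d X Y = d X Y"
    and "\<forall>X Y. X \<notin> Q \<or> Y \<notin> Q \<longrightarrow> d X Y = 0"
    and "\<forall>d'. pseudometric_on Q d' \<and> (\<forall>X\<in>Q. \<forall>Y\<in>Q. Phi d' X Y = d' X Y)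
            \<longrightarrow> (\<forall>X\<in>Q. \<forall>Y\<in>Q. d X Y \<le> d' X Y)"
  shows "bd = d"
  unfolding bd_def
proof (rule the_equality)
  fix d' :: "'a exp set \<Rightarrow> 'a exp set \<Rightarrow> real" assume d': "pseudometric_on Q d' \<and> (\<forall>X\<in>Q. \<forall>Y\<in>Q. Phi d' X Y = d' X Y)
     \<and> (\<forall>X Y. X \<notin> Q \<or> Y \<notin> Q \<longrightarrow> d' X Y = 0)
     \<and> (\<forall>d''. pseudometric_on Q d'' \<and> (\<forall>X\<in>Q. \<forall>Y\<in>Q. Phi d'' X Y = d'' X Y)
          \<longrightarrow> (\<forall>X\<in>Q. \<forall>Y\<in>Q. d' X Y \<le> d'' X Y))"
  show "d' = d"
  proof (intro ext)
    fix X Y show "d' X Y = d X Y"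
    proof (cases "X \<in> Q \<and> Y \<in> Q")
      case True
      then show ?thesis using assms d' by (meson antisym)
    next
      case False
      then show ?thesis using assms(3) d' by auto
    qed
  qed
qed (use assms in blast)

lemma bd_eq_class_dist: "bd = class_dist"
proof (rule bd_eqI)
  show "pseudometric_on Q class_dist" by (rule pseudometric_on_class_dist)
  show "\<forall>X\<in>Q. \<forall>Y\<in>Q. Phi class_dist X Y = class_dist X Y"
    by (metis Q_cases Phi_class_dist_cls)
  show "\<forall>X Y. X \<notin> Q \<or> Y \<notin> Q \<longrightarrow> class_dist X Y = 0"
    by (simp add: class_dist_def)
  show "\<forall>d'. pseudometric_on Q d' \<and> (\<forall>X\<in>Q. \<forall>Y\<in>Q. Phi d' X Y = d' X Y)
      \<longrightarrow> (\<forall>X\<in>Q. \<forall>Y\<in>Q. class_dist X Y \<le> d' X Y)"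
    by (metis Q_cases class_dist_le_fixpoint)
qed

lemma bd_cls: "bd (cls x) (cls y) = depth_dist x y"
  by (simp add: bd_eq_class_dist class_dist_cls)

section \<open>Substitution is non-expansive\<close>

lemma depth_dist_le_Max:
  assumes "finite P" and "P \<noteq> {}"
    and "\<And>k. \<forall>(x, y)\<in>P. kbisim k x y \<Longrightarrow> kbisim k x' y'"
  shows "depth_dist x' y' \<le> Max ((\<lambda>(x, y). depth_dist x y) ` P)"
proof -
  let ?D = "(\<lambda>(x, y). depth_dist x y) ` P"
  have "Max ?D \<in> ?D" using assms(1,2) by (intro Max_in) auto
  then obtain x y where "(x, y) \<in> P" and M: "Max ?D = depth_dist x y" by auto
  have "depth_dist x' y' \<le> depth_dist x y"
  proof (rule depth_dist_leI)
    fix k assume "kbisim k x y"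
    then have "\<forall>(x'', y'')\<in>P. depth_dist x'' y'' \<le> (1/2) ^ k"
      using M Max_ge[of ?D] assms(1) depth_dist_le_iff[of x y k] by fastforce
    then show "kbisim k x' y'" using assms(3) depth_dist_le_iff by fast
  qed
  then show ?thesis using M by simp
qed

lemma simsub_nth:
  "distinct vs \<Longrightarrow> length gs = length vs \<Longrightarrow> j < length vs \<Longrightarrow> simsub vs gs (vs ! j) = gs ! j"
  unfolding simsub_def by (simp add: map_of_zip_nth)

lemma simsub_notin:
  assumes "length gs = length vs" and "u \<notin> set vs"
  shows "simsub vs gs u = Var u"
proof -
  have "map_of (zip vs gs) u = None" using assms map_of_zip_is_None[of vs gs u] by simp
  then show ?thesis unfolding simsub_def by simp
qed

lemma kbisim_simsub:
  assumes "distinct vs" and "length gs = length vs" and "length hs = length vs"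
    and "\<forall>j<length vs. kbisim k (gs ! j) (hs ! j)"
  shows "kbisim k (simsub vs gs u) (simsub vs hs u)"
proof (cases "u \<in> set vs")
  case True
  then obtain j where "j < length vs" "u = vs ! j" by (metis in_set_conv_nth)
  then show ?thesis using assms by (simp add: simsub_nth)
qed (use assms in \<open>simp add: simsub_notin kbisim_refl\<close>)

theorem mainTheorem12:
  fixes vs :: "nat list" and e f :: "'a exp" and gs hs :: "'a exp list"
  assumes "distinct vs" and "length gs = length vs" and "length hs = length vs"
  shows "bd (cls (subst (simsub vs gs) e)) (cls (subst (simsub vs hs) f))
           \<le> Max (insert (bd (cls e) (cls f))
                  {bd (cls (gs ! j)) (cls (hs ! j)) | j. j < length vs})"
proof -
  define P where "P = insert (e, f) ((\<lambda>j. (gs ! j, hs ! j)) ` {..<length vs})"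
  have bounds: "insert (depth_dist e f) {depth_dist (gs ! j) (hs ! j) | j. j < length vs}
      = (\<lambda>(x, y). depth_dist x y) ` P"
    unfolding P_def by auto
  have "depth_dist (subst (simsub vs gs) e) (subst (simsub vs hs) f)
      \<le> Max ((\<lambda>(x, y). depth_dist x y) ` P)"
  proof (rule depth_dist_le_Max)
    show "finite P" "P \<noteq> {}" unfolding P_def by auto
  next
    fix k assume "\<forall>(x, y)\<in>P. kbisim k x y"
    then have "kbisim k e f" and "\<forall>j<length vs. kbisim k (gs ! j) (hs ! j)"
      unfolding P_def by auto
    then show "kbisim k (subst (simsub vs gs) e) (subst (simsub vs hs) f)"
      using assms by (intro kbisim_subst kbisim_simsub)
  qed
  then show ?thesis unfolding bd_cls bounds .
qed

end
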